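(* Let $p>0$, real numbers $A<B$, and $n\in\mathbb{N}$. Let $\Omega_{[A,B]}=\{x\in\mathbb{R}^n:\ A\le x_1\le x_2\le\dots\le x_n\le B\}$ and for $b\in\mathbb{R}$ let $q_b(x)=\sum_{i=1}^n\mathrm{ReLU}(x_i-b)$. Then for all $x,y\in\Omega_{[A,B]}$, $$\mathbb{E}_{b\sim U[A,B]}\,|q_b(x)-q_b(y)|^p\ \ge\ \frac{1}{8n(B-A)4^p}\,\|x-y\|_\infty^{p+1}.$$
   Context: $U[A,B]$ denotes the uniform distribution on the interval $[A,B]$. *)

theory Defs
  imports "HOL-Probability.Probability"
begin

definition ReLU :: "real \<Rightarrow> real" where
  "ReLU t = max t 0"

text \<open>Vectors in R^n are represented as functions nat => real, using indices 1..n.\<close>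

definition qb :: "nat \<Rightarrow> real \<Rightarrow> (nat \<Rightarrow> real) \<Rightarrow> real" where
  "qb n b x = (\<Sum>i=1..n. ReLU (x i - b))"

definition Omega :: "nat \<Rightarrow> real \<Rightarrow> real \<Rightarrow> (nat \<Rightarrow> real) set" where
  "Omega n A B = {x. A \<le> x 1 \<and> (\<forall>i. 1 \<le> i \<and> i < n \<longrightarrow> x i \<le> x (i+1)) \<and> x n \<le> B}"

definition linf_norm :: "nat \<Rightarrow> (nat \<Rightarrow> real) \<Rightarrow> real" where
  "linf_norm n z = Max ((\<lambda>i. \<bar>z i\<bar>) ` {1..n})"

end

theory Submission imports Defs begin

text \<open>For every coordinate k the gap g(b) = q_b(x) - q_b(y) drops at least at unit speed while
  b runs through the segment between y_k and x_k, because every summand of g is monotone there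
  (the vectors are sorted) and the k-th one drops at exactly unit speed. Hence on one side of the
  midpoint of the segment |g| stays above a quarter of its length d = |x_k - y_k| on an interval
  of length d/4, which contributes (d/4)^p (d/4) / (B - A) to the expectation; choosing k with
  d = \<parallel>x - y\<parallel>_\<infinity> gives the bound, even without the factor 1/(2n).\<close>

lemma uniform_measure_integral_ge_subinterval:
  fixes F :: "real \<Rightarrow> real"
  assumes "A < B" and "A \<le> u" "u \<le> v" "v \<le> B" and "0 \<le> c"
    and F_ge: "\<And>b. b \<in> {u..v} \<Longrightarrow> c \<le> F b"
    and F_nonneg: "\<And>b. 0 \<le> F b" and F_bounded: "\<And>b. F b \<le> K"
    and F_meas: "F \<in> borel_measurable borel"
  shows "c * (v - u) / (B - A) \<le> (\<integral>b. F b \<partial>uniform_measure lborel {A..B})"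
proof -
  let ?M = "uniform_measure lborel {A..B}"
  interpret prob_space ?M
    by (rule prob_space_uniform_measure) (use \<open>A < B\<close> in auto)
  have "integrable ?M (\<lambda>b. c * indicator {u..v} b)"
    by (auto intro!: integrable_const_bound[where B = 1] split: split_indicator)
  moreover have "integrable ?M F"
    using F_meas by (intro integrable_const_bound[where B = K])
      (auto simp: F_nonneg F_bounded measurable_def)
  ultimately have "(\<integral>b. c * indicator {u..v} b \<partial>?M) \<le> (\<integral>b. F b \<partial>?M)"
    by (rule integral_mono) (use F_ge F_nonneg in \<open>auto split: split_indicator\<close>)
  moreover have "measure ?M {u..v} = (v - u) / (B - A)"
    using assms(1-4) by (subst measure_uniform_measure) (auto simp: Int_absorb1)
  ultimately show ?thesis
    by simp
qed

lemma exists_subinterval_abs_ge: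
  fixes g :: "real \<Rightarrow> real"
  assumes "s \<le> t"
    and drop: "\<And>a b. s \<le> a \<Longrightarrow> a \<le> b \<Longrightarrow> b \<le> t \<Longrightarrow> b - a \<le> g a - g b"
  obtains u v where "s \<le> u" "u \<le> v" "v \<le> t" "v - u = (t - s) / 4"
    and "\<And>b. b \<in> {u..v} \<Longrightarrow> (t - s) / 4 \<le> \<bar>g b\<bar>"
proof -
  define m where "m = (s + t) / 2"
  define d where "d = (t - s) / 4"
  have "s \<le> m - d" "m - d \<le> m" "m \<le> m + d" "m + d \<le> t" "(m + d) - m = d"
    using \<open>s \<le> t\<close> by (auto simp: m_def d_def field_simps)
  show thesis
  proof (cases "g m \<le> 0")
    case True
    have "d \<le> \<bar>g b\<bar>" if "b \<in> {m + d..t}" for b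
      using drop[of m b] that True \<open>m - d \<le> m\<close> \<open>s \<le> m - d\<close> by auto
    then show thesis
      using that[of "m + d" t] \<open>s \<le> m - d\<close> \<open>m - d \<le> m\<close> \<open>m \<le> m + d\<close> \<open>m + d \<le> t\<close>
      by (simp add: m_def d_def field_simps)
  next
    case False
    have "d \<le> \<bar>g b\<bar>" if "b \<in> {s..m - d}" for b
      using drop[of b m] that False \<open>m \<le> m + d\<close> \<open>m + d \<le> t\<close> by auto
    then show thesis
      using that[of s "m - d"] \<open>s \<le> m - d\<close> \<open>m - d \<le> m\<close> \<open>m \<le> m + d\<close> \<open>m + d \<le> t\<close>
      by (simp add: m_def d_def field_simps)
  qed
qed

lemma Omega_mono:
  assumes "x \<in> Omega n A B" "1 \<le> i" "i \<le> j" "j \<le> n"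
  shows "x i \<le> x j"
  using assms(3,4)
proof (induction j rule: dec_induct)
  case (step m)
  then have "x m \<le> x (m + 1)"
    using assms(1,2) by (auto simp: Omega_def)
  with step show ?case
    by simp
qed simp

lemma Omega_bounds:
  assumes "x \<in> Omega n A B" "1 \<le> k" "k \<le> n"
  shows "A \<le> x k" "x k \<le> B"
  using Omega_mono[OF assms(1), of 1 k] Omega_mono[OF assms(1), of k n] assms
  by (auto simp: Omega_def)

lemma qb_gap_drop:
  assumes x: "x \<in> Omega n A B" and y: "y \<in> Omega n A B" and "1 \<le> k" "k \<le> n"
    and "y k \<le> a" "a \<le> b" "b \<le> x k"
  shows "b - a \<le> (qb n a x - qb n a y) - (qb n b x - qb n b y)"
proof -
  define h where
    "h i = (ReLU (x i - a) - ReLU (x i - b)) - (ReLU (y i - a) - ReLU (y i - b))" for i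
  have h_nonneg: "0 \<le> h i" if "i \<in> {1..n}" for i
  proof (cases "k \<le> i")
    case True
    then have "x k \<le> x i"
      using Omega_mono[OF x] \<open>1 \<le> k\<close> that by auto
    then show ?thesis
      using assms(5-7) by (simp add: h_def ReLU_def max_def)
  next
    case False
    then have "y i \<le> y k"
      using Omega_mono[OF y] \<open>k \<le> n\<close> that by auto
    then show ?thesis
      using assms(5-7) by (simp add: h_def ReLU_def max_def)
  qed
  have "b - a = h k"
    using assms(5-7) by (simp add: h_def ReLU_def)
  also have "h k \<le> (\<Sum>i=1..n. h i)"
    using h_nonneg assms(3,4) by (intro member_le_sum) auto
  also have "\<dots> = (qb n a x - qb n a y) - (qb n b x - qb n b y)"
    by (simp add: qb_def h_def sum_subtractf)
  finally show ?thesis .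
qed

lemma qb_gap_abs_le: "\<bar>qb n b x - qb n b y\<bar> \<le> (\<Sum>i=1..n. \<bar>x i - y i\<bar>)"
proof -
  have "\<bar>qb n b x - qb n b y\<bar> = \<bar>\<Sum>i=1..n. ReLU (x i - b) - ReLU (y i - b)\<bar>"
    by (simp add: qb_def sum_subtractf)
  also have "\<dots> \<le> (\<Sum>i=1..n. \<bar>ReLU (x i - b) - ReLU (y i - b)\<bar>)"
    by (rule sum_abs)
  also have "\<dots> \<le> (\<Sum>i=1..n. \<bar>x i - y i\<bar>)"
    by (rule sum_mono) (auto simp: ReLU_def max_def)
  finally show ?thesis .
qed

lemma borel_measurable_qb_gap_powr:
  "(\<lambda>b. \<bar>qb n b x - qb n b y\<bar> powr p) \<in> borel_measurable borel"
  unfolding qb_def ReLU_def by measurable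

lemma integral_qb_gap_powr_ge_coordinate:
  assumes x: "x \<in> Omega n A B" and y: "y \<in> Omega n A B" and k: "1 \<le> k" "k \<le> n"
    and "y k \<le> x k" and "A < B" and "0 < p"
  shows "((x k - y k) / 4) powr p * ((x k - y k) / 4) / (B - A)
           \<le> (\<integral>b. \<bar>qb n b x - qb n b y\<bar> powr p \<partial>uniform_measure lborel {A..B})"
proof -
  let ?d = "(x k - y k) / 4"
  obtain u v where uv: "y k \<le> u" "u \<le> v" "v \<le> x k" "v - u = ?d"
    and gap: "\<And>b. b \<in> {u..v} \<Longrightarrow> ?d \<le> \<bar>qb n b x - qb n b y\<bar>"
    using exists_subinterval_abs_ge[of "y k" "x k" "\<lambda>b. qb n b x - qb n b y"]
      qb_gap_drop[OF x y k] \<open>y k \<le> x k\<close> by blast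
  have "?d powr p * (v - u) / (B - A)
          \<le> (\<integral>b. \<bar>qb n b x - qb n b y\<bar> powr p \<partial>uniform_measure lborel {A..B})"
  proof (rule uniform_measure_integral_ge_subinterval
      [where K = "(\<Sum>i=1..n. \<bar>x i - y i\<bar>) powr p"])
    show "A \<le> u" "v \<le> B"
      using uv Omega_bounds[OF x k] Omega_bounds[OF y k] by auto
    show "?d powr p \<le> \<bar>qb n b x - qb n b y\<bar> powr p" if "b \<in> {u..v}" for b
      using gap[OF that] \<open>y k \<le> x k\<close> \<open>0 < p\<close> by (auto intro!: powr_mono2)
    show "\<bar>qb n b x - qb n b y\<bar> powr p \<le> (\<Sum>i=1..n. \<bar>x i - y i\<bar>) powr p" for b
      using qb_gap_abs_le \<open>0 < p\<close> by (auto intro!: powr_mono2)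
  qed (use uv \<open>A < B\<close> in \<open>auto simp: borel_measurable_qb_gap_powr\<close>)
  then show ?thesis
    using uv by simp
qed

lemma quarter_powr_bound_dominates:
  fixes e p A B :: real and n :: nat
  assumes "0 \<le> e" and "1 \<le> n" and "A < B"
  shows "1 / (8 * real n * (B - A) * 4 powr p) * e powr (p + 1)
           \<le> (e / 4) powr p * (e / 4) / (B - A)"
proof -
  have "1 / (8 * real n * (B - A) * 4 powr p) * e powr (p + 1)
          = e powr p * e / (8 * real n * 4 powr p * (B - A))"
    using \<open>0 \<le> e\<close> by (cases "e = 0") (auto simp: powr_add ac_simps)
  also have "\<dots> \<le> e powr p * e / (4 * 4 powr p * (B - A))"
    using assms by (intro divide_left_mono mult_right_mono mult_pos_pos) auto
  also have "\<dots> = (e / 4) powr p * (e / 4) / (B - A)"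
    using \<open>0 \<le> e\<close> by (simp add: powr_divide field_simps)
  finally show ?thesis .
qed

theorem mainTheorem8:
  fixes p A B :: real and n :: nat and x y :: "nat \<Rightarrow> real"
  assumes "p > 0" and "A < B" and "n \<ge> 1"
    and "x \<in> Omega n A B" and "y \<in> Omega n A B"
  shows "(\<integral>b. \<bar>qb n b x - qb n b y\<bar> powr p \<partial>(uniform_measure lborel {A..B}))
           \<ge> 1 / (8 * real n * (B - A) * 4 powr p) * linf_norm n (\<lambda>i. x i - y i) powr (p + 1)"
proof -
  let ?I = "\<lambda>x y. \<integral>b. \<bar>qb n b x - qb n b y\<bar> powr p \<partial>uniform_measure lborel {A..B}"
  obtain k where k: "1 \<le> k" "k \<le> n"
    and norm: "linf_norm n (\<lambda>i. x i - y i) = \<bar>x k - y k\<bar>"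
    using Max_in[of "(\<lambda>i. \<bar>x i - y i\<bar>) ` {1..n}"] \<open>n \<ge> 1\<close>
    unfolding linf_norm_def by fastforce
  have "?I x y = ?I y x"
    by (simp add: abs_minus_commute)
  then have "(\<bar>x k - y k\<bar> / 4) powr p * (\<bar>x k - y k\<bar> / 4) / (B - A) \<le> ?I x y"
    using integral_qb_gap_powr_ge_coordinate[OF assms(4,5) k _ assms(2,1)]
      integral_qb_gap_powr_ge_coordinate[OF assms(5,4) k _ assms(2,1)]
    by (cases "y k \<le> x k") auto
  then show ?thesis
    using quarter_powr_bound_dominates[of "\<bar>x k - y k\<bar>" n A B p] assms norm by simp
qed

end
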